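(* Under the standing assumptions, $\rho+\mathcal V=j_k\mathsf n^k$; equivalently $e_k(B)-e_k(\tilde D)=\mathsf n^{\mathsf T}\gamma\,W\,\mathsf n$. Moreover $U\mathsf n=\tilde U\tilde{\mathsf n}$ and $\mathsf n^{\mathsf T}\gamma W\mathsf n=\lambda^2\,\tilde{\mathsf n}^{\mathsf T}\varphi\tilde U\tilde{\mathsf n}$.
   Context: Let $s\ge1$. For a square matrix $X$, $e_k(X)$ are the elementary symmetric polynomials defined by $\det(I+tX)=\sum_k e_k(X)t^k$ ($e_k=0$ for $k<0$); $Y_k(X):=\sum_{i=0}^{k}(-1)^{k+i}e_i(X)X^{k-i}$ for $k\ge0$ and $Y_{-1}(X):=0$. Standing assumptions: $e,m$ are invertible real $s\times s$ matrices, $v\in\mathbb R^s$ with $v^{\mathsf T}v<1$, $\lambda:=(1-v^{\mathsf T}v)^{-1/2}$, $\hat\Lambda:=(I-vv^{\mathsf T})^{-1/2}$, and $e^{\mathsf T}\hat\Lambda m$ is symmetric. Define $\gamma=e^{\mathsf T}e$, $\varphi=m^{\mathsf T}m$, $\mathsf n=e^{-1}v$, $\tilde{\mathsf n}=m^{-1}v$, $\tilde D=e^{-1}\hat\Lambda^{-1}m$, $B=e^{-1}\hat\Lambda m$. Fix an integer $k$ and set $U=\lambda^{-1}Y_{k-1}(B)$, $\tilde U=\tilde D\,Y_{k-1}(\tilde D)$, $W=B\,Y_{k-1}(\tilde D)$, $\mathcal V=e_k(\tilde D)$, $\rho=-e_k(B)$, $j=-\gamma W\mathsf n$. *)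

theory Defs
  imports "HOL-Analysis.Analysis" "HOL-Computational_Algebra.Polynomial"
begin

primrec mpow :: "real^'n^'n \<Rightarrow> nat \<Rightarrow> real^'n^'n" where
  "mpow X 0 = mat 1"
| "mpow X (Suc n) = X ** mpow X n"

definition esym :: "int \<Rightarrow> real^'n^'n \<Rightarrow> real" where
  "esym k X = (if k < 0 then 0 else
     coeff (det (\<chi> i j. (if i = j then 1 else 0) + [:0, X $ i $ j:] :: real poly^'n^'n)) (nat k))"

definition Ymat :: "int \<Rightarrow> real^'n^'n \<Rightarrow> real^'n^'n" where
  "Ymat k X = (if k < 0 then 0 else
     (\<Sum>i = 0..nat k. ((-1) ^ (nat k + i) * esym (int i) X) *\<^sub>R mpow X (nat k - i)))"

definition outer :: "real^'n \<Rightarrow> real^'n \<Rightarrow> real^'n^'n" where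
  "outer u w = (\<chi> i j. u $ i * w $ j)"

definition pos_def_mat :: "real^'n^'n \<Rightarrow> bool" where
  "pos_def_mat S \<longleftrightarrow> (\<forall>x. x \<noteq> 0 \<longrightarrow> x \<bullet> (S *v x) > 0)"

definition inv_sqrt_mat :: "real^'n^'n \<Rightarrow> real^'n^'n" where
  "inv_sqrt_mat A = (THE S. transpose S = S \<and> pos_def_mat S \<and> S ** S = matrix_inv A)"

end

theory Submission
  imports Defs "HOL-Computational_Algebra.Polynomial_FPS"
begin

text \<open>
  For \<open>v \<bullet> v < 1\<close> the matrix \<open>\<hat>\<Lambda> = I + c v v\<^sup>T\<close> with \<open>c (v \<bullet> v) = \<lambda> - 1\<close>
  is the unique positive definite square root of \<open>(I - v v\<^sup>T)\<^sup>-\<^sup>1\<close>, and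
  \<open>\<hat>\<Lambda> - \<hat>\<Lambda>\<^sup>-\<^sup>1 = \<lambda> v v\<^sup>T\<close>. Hence \<open>B = D\<^sub>t + \<lambda> n w\<^sup>T\<close> with \<open>w = m\<^sup>T v\<close>
  is a rank-one perturbation of \<open>D\<^sub>t\<close>.
  Over formal power series in \<open>t\<close>, the series \<open>\<Sum>k. Y\<^sub>k(A) t\<^sup>k\<close> is the adjugate of
  \<open>I + tA\<close>, whose determinant \<open>\<Sum>k. e\<^sub>k(A) t\<^sup>k\<close> is a unit. The matrix determinant
  lemma over this ring gives \<open>e\<^sub>k(A + u w\<^sup>T) = e\<^sub>k(A) + w\<^sup>T Y\<^sub>k\<^sub>-\<^sub>1(A) u\<close> and
  \<open>Y\<^sub>k(A + u w\<^sup>T) u = Y\<^sub>k(A) u\<close>. Together with \<open>\<hat>\<Lambda> v = \<lambda> v\<close> and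
  \<open>\<hat>\<Lambda>\<^sup>-\<^sup>1 v = v / \<lambda>\<close>, all four identities reduce to multiples of
  \<open>w\<^sup>T Y\<^sub>k\<^sub>-\<^sub>1(D\<^sub>t) n\<close>.
\<close>

lemma matrix_mul_sum_right: "(A::'a::semiring_1^'n^'m) ** sum f S = (\<Sum>x\<in>S. A ** f x)"
  by (induction S rule: infinite_finite_induct) (auto simp: matrix_add_ldistrib)

lemma matrix_add_rdistrib: "((A::'a::semiring_1^'n^'m) + B) ** C = A ** C + B ** C"
  by (simp add: matrix_matrix_mult_def vec_eq_iff sum.distrib distrib_right)

lemma matrix_diff_ldistrib: "(A::'a::ring_1^'n^'m) ** (B - C) = A ** B - A ** C"
  by (simp add: matrix_matrix_mult_def vec_eq_iff sum_subtractf right_diff_distrib)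

lemma matrix_diff_rdistrib: "((A::'a::ring_1^'n^'m) - B) ** C = A ** C - B ** C"
  by (simp add: matrix_matrix_mult_def vec_eq_iff sum_subtractf left_diff_distrib)

lemma mat_mult_vector: "mat c *v x = c *s (x::'a::comm_semiring_1^'n)"
  by (simp add: matrix_vector_mult_def mat_def vec_eq_iff if_distrib if_distribR cong: if_cong)

lemma inner_transpose_mult: "x \<bullet> (transpose A *v y) = (A *v x) \<bullet> (y::real^'n)"
  by (metis dot_lmul_matrix vector_transpose_matrix)

lemma matrix_inv_unique:
  fixes A B :: "'a::semiring_1^'n^'n"
  assumes "A ** B = mat 1" "B ** A = mat 1"
  shows "matrix_inv A = B"
proof -
  have "A ** matrix_inv A = mat 1 \<and> matrix_inv A ** A = mat 1"
    unfolding matrix_inv_def by (rule someI[of _ B]) (use assms in simp)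
  then have "matrix_inv A = matrix_inv A ** (A ** B)" using assms by simp
  also have "\<dots> = B" by (simp add: matrix_mul_assoc \<open>_ \<and> _\<close>)
  finally show ?thesis .
qed

lemma matrix_inv_right: "invertible (A::'a::semiring_1^'n^'n) \<Longrightarrow> A ** matrix_inv A = mat 1"
  unfolding invertible_def matrix_inv_def by (metis (mono_tags, lifting) someI_ex)

lemma outer_mult_vector: "outer p q *v x = (q \<bullet> x) *\<^sub>R p"
  by (simp add: outer_def matrix_vector_mult_def inner_vec_def vec_eq_iff sum_distrib_left mult_ac)

lemma mult_outer: "M ** outer p q = outer (M *v p) q"
  by (simp add: outer_def matrix_matrix_mult_def matrix_vector_mult_def vec_eq_iff
      sum_distrib_right mult.assoc)

lemma outer_mult: "outer p q ** M = outer p (transpose M *v q)"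
  by (simp add: outer_def matrix_matrix_mult_def matrix_vector_mult_def transpose_def vec_eq_iff
      sum_distrib_left mult_ac)

section \<open>Determinants over a commutative ring\<close>

lemma det_map_ring_hom:
  fixes h :: "'a::comm_ring_1 \<Rightarrow> 'b::comm_ring_1" and A :: "'a^'n^'n"
  assumes add: "\<And>x y. h (x + y) = h x + h y" and mult: "\<And>x y. h (x * y) = h x * h y"
    and one: "h 1 = 1"
  shows "h (det A) = det (\<chi> i j. h (A $ i $ j))"
proof -
  have zero: "h 0 = 0" using add[of 0 0] by simp
  have uminus: "h (- x) = - h x" for x
    using minus_unique[of "h x" "h (- x)"] add[of x "- x"] zero by simp
  have sign: "h (of_int (sign p)) = of_int (sign p)" for p :: "'n \<Rightarrow> 'n"
    by (cases "sign p = 1") (auto simp: sign_def one uminus)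
  have sum: "h (sum f S) = (\<Sum>x\<in>S. h (f x))" for f :: "('n \<Rightarrow> 'n) \<Rightarrow> 'a" and S
    by (induction S rule: infinite_finite_induct) (auto simp: zero add)
  have prod: "h (prod f S) = (\<Prod>x\<in>S. h (f x))" for f :: "'n \<Rightarrow> 'a" and S
    by (induction S rule: infinite_finite_induct) (auto simp: one mult)
  show ?thesis unfolding det_def sum mult prod sign by simp
qed

lemma det_replace_row_of_identity:
  fixes y :: "'a::comm_ring_1^'n"
  shows "det (\<chi> i. if i = k then y else axis i 1) = y $ k"
proof -
  have y: "y = (\<Sum>j\<in>UNIV. y $ j *s axis j 1)"
    by (simp add: vec_eq_iff axis_def if_distrib cong: if_cong)
  have unit_row: "det (\<chi> i. if i = k then axis j 1 else axis i (1::'a)) = (if j = k then 1 else 0)" for j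
  proof (cases "j = k")
    case True
    then have "(\<chi> i. if i = k then axis j 1 else axis i (1::'a)) = mat 1"
      by (simp add: vec_eq_iff axis_def mat_def)
    then show ?thesis using True by simp
  next
    case False
    have "det (\<chi> i. if i = k then axis j 1 else axis i (1::'a)) = 0"
      by (rule det_identical_rows[OF False]) (simp add: row_def vec_eq_iff)
    with False show ?thesis by simp
  qed
  have "det (\<chi> i. if i = k then y else axis i 1)
      = (\<Sum>j\<in>UNIV. det (\<chi> i. if i = k then y $ j *s axis j 1 else axis i 1))"
    by (subst y) (rule det_linear_row_sum, simp)
  also have "\<dots> = (\<Sum>j\<in>UNIV. y $ j * (if j = k then 1 else 0))"
    by (simp only: det_row_mul unit_row)
  finally show ?thesis by (simp add: if_distrib cong: if_cong)
qed

lemma det_add_multiples_of_row: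
  fixes A :: "'a::comm_ring_1^'n^'n"
  assumes "k \<notin> S"
  shows "det (\<chi> i. if i \<in> S then row i A + c i *s row k A else row i A) = det A"
proof -
  have "finite S" by simp
  then show ?thesis using assms
  proof (induction S rule: finite_induct)
    case empty
    then show ?case by (simp add: row_def)
  next
    case (insert j S)
    let ?A = "(\<chi> i. if i \<in> S then row i A + c i *s row k A else row i A) :: 'a^'n^'n"
    have "j \<noteq> k" using insert.prems by auto
    have "(\<chi> i. if i \<in> insert j S then row i A + c i *s row k A else row i A)
        = (\<chi> i. if i = j then row j ?A + c j *s row k ?A else row i ?A)"
      using insert.hyps(2) insert.prems by (auto simp: vec_eq_iff row_def)
    then show ?case
      using det_row_operation[OF \<open>j \<noteq> k\<close>, where c = "c j" and A = ?A] insert by simp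
  qed
qed

lemma det_identity_add_outer_rows:
  fixes x y :: "'a::comm_ring_1^'n"
  shows "det (\<chi> i. if i \<in> S then axis i 1 + x $ i *s y else axis i 1)
         = 1 + (\<Sum>i\<in>S. x $ i * y $ i)"
proof -
  let ?rows = "\<lambda>S i. if i \<in> S then axis i 1 + x $ i *s y else axis i (1::'a)"
  have "finite S" by simp
  then show ?thesis
  proof (induction S rule: finite_induct)
    case empty
    have "(\<chi> i. ?rows {} i) = mat 1" by (simp add: vec_eq_iff axis_def mat_def)
    then show ?case by simp
  next
    case (insert k S)
    let ?Z = "(\<chi> i. if i = k then y else axis i 1) :: 'a^'n^'n"
    have split: "(\<chi> i. ?rows (insert k S) i)
        = (\<chi> i. if i = k then axis k 1 + x $ k *s y else ?rows S i)"
      by (simp add: vec_eq_iff)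
    have unperturbed: "(\<chi> i. if i = k then axis k 1 else ?rows S i) = (\<chi> i. ?rows S i)"
      using insert.hyps(2) by (simp add: vec_eq_iff)
    have "(\<chi> i. if i = k then y else ?rows S i)
        = (\<chi> i. if i \<in> S then row i ?Z + x $ i *s row k ?Z else row i ?Z)"
      using insert.hyps(2) by (auto simp: vec_eq_iff row_def)
    then have perturbed: "det (\<chi> i. if i = k then y else ?rows S i) = y $ k"
      using det_add_multiples_of_row[OF insert.hyps(2), where c = "($) x" and A = ?Z]
        det_replace_row_of_identity
      by simp
    show ?case
      unfolding split det_row_add det_row_mul unperturbed perturbed insert.IH
      using insert.hyps by (simp add: algebra_simps)
  qed
qed

lemma det_identity_add_outer:
  fixes x y :: "'a::comm_ring_1^'n"
  shows "det (mat 1 + (\<chi> i j. x $ i * y $ j)) = 1 + (\<Sum>i\<in>UNIV. x $ i * y $ i)"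
proof -
  have "mat 1 + (\<chi> i j. x $ i * y $ j)
      = (\<chi> i. if i \<in> UNIV then axis i 1 + x $ i *s y else axis i (1::'a))"
    by (simp add: vec_eq_iff axis_def mat_def)
  then show ?thesis by (simp only: det_identity_add_outer_rows)
qed

lemma det_add_outer:
  fixes M N :: "'a::comm_ring_1^'n^'n"
  assumes "M ** N = mat 1"
  shows "det (M + (\<chi> i j. p $ i * q $ j)) = det M * (1 + (\<Sum>i\<in>UNIV. (N *v p) $ i * q $ i))"
proof -
  have outer: "M ** (\<chi> i j. a $ i * q $ j) = (\<chi> i j. (M *v a) $ i * q $ j)" for a
    by (simp add: matrix_matrix_mult_def matrix_vector_mult_def vec_eq_iff sum_distrib_right mult.assoc)
  have "M + (\<chi> i j. p $ i * q $ j) = M ** (mat 1 + (\<chi> i j. (N *v p) $ i * q $ j))"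
    by (simp add: matrix_add_ldistrib outer matrix_vector_mul_assoc assms)
  then show ?thesis by (simp add: det_mul det_identity_add_outer)
qed

section \<open>The matrices \<open>Y\<^sub>k\<close> and their generating series\<close>

lemma Ymat_neg: "k < 0 \<Longrightarrow> Ymat k A = 0"
  by (simp add: Ymat_def)

lemma Ymat_of_nat:
  "Ymat (int k) A = (\<Sum>i = 0..k. ((-1) ^ (k + i) * esym (int i) A) *\<^sub>R mpow A (k - i))"
  by (simp add: Ymat_def)

lemma Ymat_0: "Ymat 0 A = esym 0 A *\<^sub>R mat 1"
  using Ymat_of_nat[of 0 A] by simp

lemma Ymat_Suc: "Ymat (int (Suc k)) A = esym (int (Suc k)) A *\<^sub>R mat 1 - A ** Ymat (int k) A"
proof -
  let ?term = "\<lambda>i. ((-1) ^ (Suc k + i) * esym (int i) A) *\<^sub>R mpow A (Suc k - i)"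
  have "?term i = - (A ** (((-1) ^ (k + i) * esym (int i) A) *\<^sub>R mpow A (k - i)))" if "i \<le> k" for i
    using that by (simp add: Suc_diff_le matrix_scalar_ac flip: scalar_matrix_assoc)
  then have "(\<Sum>i = 0..k. ?term i) = - (A ** Ymat (int k) A)"
    unfolding Ymat_of_nat matrix_mul_sum_right by (simp add: sum_negf)
  moreover have "?term (Suc k) = esym (int (Suc k)) A *\<^sub>R mat 1"
    by (simp flip: power_add mult_2)
  ultimately show ?thesis
    unfolding Ymat_of_nat[of "Suc k"] sum.atLeast0_atMost_Suc by simp
qed

lemma Ymat_commute: "A ** Ymat k A = Ymat k A ** A"
proof (cases "k < 0")
  case True
  then show ?thesis by (simp add: Ymat_neg)
next
  case False
  then obtain n where "k = int n" by (metis nonneg_int_cases not_less)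
  moreover have "A ** Ymat (int n) A = Ymat (int n) A ** A"
  proof (induction n)
    case 0
    show ?case by (simp add: Ymat_0 matrix_scalar_ac flip: scalar_matrix_assoc)
  next
    case (Suc n)
    then show ?case unfolding Ymat_Suc
      by (simp add: matrix_diff_ldistrib matrix_diff_rdistrib matrix_scalar_ac matrix_mul_assoc
          flip: scalar_matrix_assoc)
  qed
  ultimately show ?thesis by simp
qed

definition pencil :: "real^'n^'n \<Rightarrow> real fps^'n^'n" where
  "pencil A = (\<chi> i j. (if i = j then 1 else 0) + fps_X * fps_const (A $ i $ j))"

definition adjugate_series :: "real^'n^'n \<Rightarrow> real fps^'n^'n" where
  "adjugate_series A = (\<chi> i j. Abs_fps (\<lambda>k. Ymat (int k) A $ i $ j))"

lemma fps_nth_det_pencil: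
  fixes A :: "real^'n^'n"
  shows "fps_nth (det (pencil A)) k = esym (int k) A"
proof -
  let ?P = "(\<chi> i j. (if i = j then 1 else 0) + [:0, A $ i $ j:]) :: real poly^'n^'n"
  have "fps_of_poly (det ?P) = det (\<chi> i j. fps_of_poly (?P $ i $ j))"
    by (rule det_map_ring_hom) (simp_all add: fps_of_poly_add fps_of_poly_mult)
  also have "(\<chi> i j. fps_of_poly (?P $ i $ j)) = pencil A"
    by (simp add: pencil_def vec_eq_iff fps_of_poly_add fps_of_poly_pCons fps_of_poly_const
        mult.commute)
  finally show ?thesis by (simp add: esym_def flip: fps_of_poly_nth)
qed

lemma fps_nth_pencil_0: "fps_nth (pencil A $ i $ j) 0 = (if i = j then 1 else 0)"
  by (simp add: pencil_def)

lemma fps_nth_det_pencil_0: "fps_nth (det (pencil (A::real^'n^'n))) 0 = 1"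
proof -
  have "fps_nth (det (pencil A)) 0 = det (\<chi> i j. fps_nth (pencil A $ i $ j) 0)"
    by (rule det_map_ring_hom) simp_all
  also have "(\<chi> i j. fps_nth (pencil A $ i $ j) 0) = (mat 1 :: real^'n^'n)"
    by (simp add: fps_nth_pencil_0 vec_eq_iff mat_def)
  finally show ?thesis by simp
qed

lemma esym_0: "esym 0 (A::real^'n^'n) = 1"
  using fps_nth_det_pencil[of A 0] fps_nth_det_pencil_0[of A] by simp

lemma Ymat_recurrence: "Ymat (int n) A + A ** Ymat (int n - 1) A = esym (int n) A *\<^sub>R mat 1"
proof (cases n)
  case 0
  then show ?thesis by (simp add: Ymat_0 Ymat_neg)
next
  case (Suc m)
  then show ?thesis using Ymat_Suc[of m A] by simp
qed

lemma fps_nth_pencil_entry_mult: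
  "fps_nth (pencil A $ i $ l * f) n
   = (if i = l then fps_nth f n else 0) + (if n = 0 then 0 else A $ i $ l * fps_nth f (n - 1))"
  by (simp add: pencil_def distrib_right mult.assoc)

lemma fps_nth_mult_pencil_entry:
  "fps_nth (f * pencil A $ l $ j) n
   = (if l = j then fps_nth f n else 0) + (if n = 0 then 0 else fps_nth f (n - 1) * A $ l $ j)"
  by (simp add: mult.commute[of f] fps_nth_pencil_entry_mult)

lemma pencil_mult_adjugate_series:
  fixes A :: "real^'n^'n"
  shows "pencil A ** adjugate_series A = mat (det (pencil A))"
proof -
  have "fps_nth ((pencil A ** adjugate_series A) $ i $ j) n
      = (Ymat (int n) A + A ** Ymat (int n - 1) A) $ i $ j" for i j n
    by (cases n) (simp_all add: matrix_matrix_mult_def fps_sum_nth fps_nth_pencil_entry_mult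
          adjugate_series_def Ymat_neg sum.distrib, simp add: fps_nth_pencil_0 mult_if_delta)
  then show ?thesis
    by (simp add: vec_eq_iff fps_eq_iff Ymat_recurrence fps_nth_det_pencil mat_def)
qed

lemma adjugate_series_mult_pencil:
  fixes A :: "real^'n^'n"
  shows "adjugate_series A ** pencil A = mat (det (pencil A))"
proof -
  have "fps_nth ((adjugate_series A ** pencil A) $ i $ j) n
      = (Ymat (int n) A + Ymat (int n - 1) A ** A) $ i $ j" for i j n
    by (cases n) (simp_all add: matrix_matrix_mult_def fps_sum_nth fps_nth_mult_pencil_entry
          adjugate_series_def Ymat_neg sum.distrib,
        simp add: fps_nth_pencil_0 mult_if_delta mult.commute[where b = "if _ then _ else _"])
  then show ?thesis
    by (simp add: vec_eq_iff fps_eq_iff Ymat_recurrence fps_nth_det_pencil mat_def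
        flip: Ymat_commute)
qed

lemma det_pencil_nonzero: "det (pencil A) \<noteq> 0"
  using fps_nth_det_pencil_0[of A] by auto

section \<open>Rank-one updates\<close>

lemma pencil_add_outer:
  "pencil (A + outer u w)
   = pencil A + (\<chi> i j. (fps_X * fps_const (u $ i)) * fps_const (w $ j))"
  by (simp add: pencil_def outer_def vec_eq_iff distrib_left mult.assoc)

lemma fps_nth_adjugate_series_mult:
  "fps_nth ((adjugate_series A *v (\<chi> i. fps_const (u $ i))) $ i) k = (Ymat (int k) A *v u) $ i"
  by (simp add: matrix_vector_mult_def adjugate_series_def fps_sum_nth)

text \<open>\<open>det (I + tA)\<close> has constant term 1, so it is a unit of \<open>real fps\<close>, and its inverse
  times the adjugate series is a right inverse of the pencil.\<close>
lemma det_pencil_add_outer: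
  fixes A :: "real^'n^'n" and u w :: "real^'n"
  defines "z \<equiv> adjugate_series A *v (\<chi> i. fps_const (u $ i))"
  shows "det (pencil (A + outer u w))
         = det (pencil A) + fps_X * (\<Sum>i\<in>UNIV. z $ i * fps_const (w $ i))"
proof -
  let ?d = "det (pencil A)"
  define N where "N = (\<chi> i j. inverse ?d * adjugate_series A $ i $ j)"
  have inverse_d: "inverse ?d * ?d = 1"
    by (rule inverse_mult_eq_1) (simp add: fps_nth_det_pencil_0)
  have "pencil A ** N = (\<chi> i j. inverse ?d * (pencil A ** adjugate_series A) $ i $ j)"
    by (simp add: N_def matrix_matrix_mult_def vec_eq_iff sum_distrib_left mult_ac)
  also have "\<dots> = mat 1"
    unfolding pencil_mult_adjugate_series by (simp add: vec_eq_iff mat_def inverse_d)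
  finally have "det (pencil (A + outer u w))
      = ?d * (1 + (\<Sum>i\<in>UNIV. (N *v (\<chi> i. fps_X * fps_const (u $ i))) $ i * fps_const (w $ i)))"
    unfolding pencil_add_outer
    using det_add_outer[where p = "\<chi> i. fps_X * fps_const (u $ i)" and q = "\<chi> j. fps_const (w $ j)"]
    by simp
  also have "N *v (\<chi> i. fps_X * fps_const (u $ i)) = (inverse ?d * fps_X) *s z"
    by (simp add: N_def z_def matrix_vector_mult_def vec_eq_iff sum_distrib_left mult_ac)
  also have "?d * (1 + (\<Sum>i\<in>UNIV. ((inverse ?d * fps_X) *s z) $ i * fps_const (w $ i)))
      = ?d + (inverse ?d * ?d) * fps_X * (\<Sum>i\<in>UNIV. z $ i * fps_const (w $ i))"
    by (simp add: sum_distrib_left algebra_simps)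
  finally show ?thesis by (simp add: inverse_d)
qed

lemma esym_add_outer:
  fixes A :: "real^'n^'n"
  shows "esym k (A + outer u w) = esym k A + w \<bullet> (Ymat (k - 1) A *v u)"
proof (cases "k \<le> 0")
  case True
  then show ?thesis by (cases "k = 0") (simp add: Ymat_neg esym_0, simp add: Ymat_neg esym_def)
next
  case False
  define m where "m = nat (k - 1)"
  have k: "k = int (Suc m)" using False by (simp add: m_def)
  have "fps_nth (det (pencil (A + outer u w))) (Suc m)
      = fps_nth (det (pencil A)) (Suc m) + w \<bullet> (Ymat (int m) A *v u)"
    unfolding det_pencil_add_outer
    by (simp add: fps_sum_nth fps_nth_adjugate_series_mult inner_vec_def mult.commute)
  then show ?thesis by (simp add: k fps_nth_det_pencil)
qed

text \<open>Both \<open>z\<close> and \<open>z'\<close> are mapped by the pencil of \<open>A + u w\<^sup>T\<close> to its determinant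
  times \<open>u\<close>; multiplying by its adjugate series cancels the pencil.\<close>
lemma adjugate_series_add_outer_mult:
  fixes A :: "real^'n^'n" and u w :: "real^'n"
  defines "cu \<equiv> \<chi> i. fps_const (u $ i)"
  shows "adjugate_series (A + outer u w) *v cu = adjugate_series A *v cu"
proof -
  let ?A' = "A + outer u w"
  let ?z = "adjugate_series A *v cu" and ?z' = "adjugate_series ?A' *v cu"
  let ?T = "\<Sum>i\<in>UNIV. ?z $ i * fps_const (w $ i)"
  have "pencil ?A' *v ?z
      = pencil A *v ?z + (\<chi> i j. (fps_X * fps_const (u $ i)) * fps_const (w $ j)) *v ?z"
    unfolding pencil_add_outer by (simp add: matrix_vector_mult_add_rdistrib)
  also have "pencil A *v ?z = det (pencil A) *s cu"
    by (simp add: matrix_vector_mul_assoc pencil_mult_adjugate_series mat_mult_vector)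
  also have "(\<chi> i j. (fps_X * fps_const (u $ i)) * fps_const (w $ j)) *v ?z = (fps_X * ?T) *s cu"
    by (simp add: matrix_vector_mult_def vec_eq_iff sum_distrib_left cu_def mult_ac
        flip: fps_const_mult)
  also have "det (pencil A) *s cu + (fps_X * ?T) *s cu = det (pencil ?A') *s cu"
    by (simp add: det_pencil_add_outer cu_def vector_sadd_rdistrib)
  finally have "pencil ?A' *v (?z - ?z') = 0"
    by (simp add: matrix_vector_mult_diff_distrib matrix_vector_mul_assoc
        pencil_mult_adjugate_series mat_mult_vector)
  then have "adjugate_series ?A' *v (pencil ?A' *v (?z - ?z')) = 0" by simp
  then have "det (pencil ?A') *s (?z - ?z') = 0"
    by (simp add: matrix_vector_mul_assoc adjugate_series_mult_pencil mat_mult_vector)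
  then show ?thesis using det_pencil_nonzero[of ?A'] by (simp only: vector_mul_eq_0) simp
qed

lemma Ymat_add_outer_mult:
  fixes A :: "real^'n^'n"
  shows "Ymat k (A + outer u w) *v u = Ymat k A *v u"
proof (cases "k < 0")
  case True
  then show ?thesis by (simp add: Ymat_neg)
next
  case False
  then obtain n where k: "k = int n" by (metis nonneg_int_cases not_less)
  have "fps_nth ((adjugate_series (A + outer u w) *v (\<chi> i. fps_const (u $ i))) $ i) n
      = fps_nth ((adjugate_series A *v (\<chi> i. fps_const (u $ i))) $ i) n" for i
    by (simp only: adjugate_series_add_outer_mult)
  then show ?thesis unfolding k fps_nth_adjugate_series_mult by (simp add: vec_eq_iff)
qed

section \<open>The boost matrix\<close>

lemma pos_def_mat_add: "pos_def_mat S \<Longrightarrow> pos_def_mat T \<Longrightarrow> pos_def_mat (S + T)"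
  by (simp add: pos_def_mat_def matrix_vector_mult_add_rdistrib inner_add_right add_pos_pos)

lemma pos_def_mat_mult_eq_0: "pos_def_mat S \<Longrightarrow> S *v x = 0 \<Longrightarrow> x = 0"
  unfolding pos_def_mat_def by force

lemma commuting_pos_def_square_roots_eq:
  fixes S T :: "real^'n^'n"
  assumes "pos_def_mat S" "pos_def_mat T" "S ** T = T ** S" "S ** S = T ** T"
  shows "S = T"
proof -
  have "(S + T) ** (S - T) = 0"
    using assms(3,4) by (simp add: matrix_add_rdistrib matrix_diff_ldistrib)
  then have "(S + T) *v ((S - T) *v x) = 0" for x
    by (simp add: matrix_vector_mul_assoc)
  then have "(S - T) *v x = 0" for x
    using pos_def_mat_add[OF assms(1,2)] pos_def_mat_mult_eq_0 by blast
  then show ?thesis by (simp add: matrix_eq matrix_vector_mult_diff_rdistrib)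
qed

lemma inv_sqrt_mat_eqI:
  fixes A L :: "real^'n^'n"
  assumes "transpose L = L" "pos_def_mat L" "L ** L = matrix_inv A"
    and "\<And>S. pos_def_mat S \<Longrightarrow> S ** S = matrix_inv A \<Longrightarrow> S ** L = L ** S"
  shows "inv_sqrt_mat A = L"
  unfolding inv_sqrt_mat_def
proof (rule the_equality)
  fix S assume "transpose S = S \<and> pos_def_mat S \<and> S ** S = matrix_inv A"
  then show "S = L"
    using commuting_pos_def_square_roots_eq[of S L] assms by metis
qed (use assms in blast)

lemma identity_plus_outer_mult_vector:
  "(mat 1 + a *\<^sub>R outer v v) *v x = x + (a * (v \<bullet> x)) *\<^sub>R v"
  by (simp add: matrix_vector_mult_add_rdistrib outer_mult_vector flip: scaleR_matrix_vector_assoc)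

lemma identity_plus_outer_mult:
  "(mat 1 + a *\<^sub>R outer v v) ** (mat 1 + b *\<^sub>R outer v v)
   = mat 1 + (a + b + a * b * (v \<bullet> v)) *\<^sub>R outer v v"
  unfolding matrix_eq
proof
  fix x
  show "((mat 1 + a *\<^sub>R outer v v) ** (mat 1 + b *\<^sub>R outer v v)) *v x
      = (mat 1 + (a + b + a * b * (v \<bullet> v)) *\<^sub>R outer v v) *v x"
    unfolding matrix_vector_mul_assoc[symmetric] identity_plus_outer_mult_vector
    by (simp add: inner_add_right algebra_simps)
qed

lemma scaleR_outer_self_eqI:
  assumes "a * (v \<bullet> v) = b * (v \<bullet> v)"
  shows "a *\<^sub>R outer v v = b *\<^sub>R outer v v"
proof (cases "v \<bullet> v = 0")
  case True
  then show ?thesis by (simp add: outer_def vec_eq_iff)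
next
  case False
  with assms show ?thesis by simp
qed

definition lorentz_factor :: "real^'n \<Rightarrow> real" where
  "lorentz_factor v = 1 / sqrt (1 - v \<bullet> v)"

text \<open>The matrix \<open>\<hat>\<Lambda>\<close>; for \<open>v = 0\<close> the coefficient is \<open>0 / 0 = 0\<close>, which is
  harmless since then \<open>outer v v = 0\<close>.\<close>
definition boost :: "real^'n \<Rightarrow> real^'n^'n" where
  "boost v = mat 1 + ((lorentz_factor v - 1) / (v \<bullet> v)) *\<^sub>R outer v v"

lemma transpose_boost: "transpose (boost v) = boost v"
  by (simp add: boost_def vec_eq_iff transpose_def outer_def mat_def mult.commute)

context
  fixes v :: "real^'n"
  assumes subluminal: "v \<bullet> v < 1"
begin

lemma lorentz_factor_pos: "lorentz_factor v > 0"
  using subluminal by (simp add: lorentz_factor_def)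

lemma lorentz_factor_ge_1: "lorentz_factor v \<ge> 1"
  using subluminal by (simp add: lorentz_factor_def real_sqrt_le_1_iff)

lemma lorentz_factor_square: "(lorentz_factor v)\<^sup>2 * (1 - v \<bullet> v) = 1"
  using subluminal by (simp add: lorentz_factor_def power_divide)

lemma lorentz_factor_square_mult: "(lorentz_factor v)\<^sup>2 * (v \<bullet> v) = (lorentz_factor v)\<^sup>2 - 1"
  using lorentz_factor_square by (simp add: algebra_simps)

lemma boost_coefficient: "(lorentz_factor v - 1) / (v \<bullet> v) * (v \<bullet> v) = lorentz_factor v - 1"
  by (cases "v \<bullet> v = 0") (simp_all add: lorentz_factor_def)

lemma boost_mult_self: "boost v *v v = lorentz_factor v *\<^sub>R v"
  unfolding boost_def identity_plus_outer_mult_vector boost_coefficient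
  by (simp add: algebra_simps)

lemma inner_boost: "v \<bullet> (boost v *v x) = lorentz_factor v * (v \<bullet> x)"
  by (metis boost_mult_self inner_scaleR_left dot_lmul_matrix transpose_boost vector_transpose_matrix)

lemma pos_def_mat_boost: "pos_def_mat (boost v)"
  unfolding pos_def_mat_def
proof (intro allI impI)
  fix x :: "real^'n"
  assume "x \<noteq> 0"
  have "0 \<le> (lorentz_factor v - 1) / (v \<bullet> v) * (v \<bullet> x)\<^sup>2"
    using lorentz_factor_ge_1 by simp
  moreover have "x \<bullet> (boost v *v x) = x \<bullet> x + (lorentz_factor v - 1) / (v \<bullet> v) * (v \<bullet> x)\<^sup>2"
    by (simp add: boost_def identity_plus_outer_mult_vector inner_add_right inner_commute[of x v]
        power2_eq_square)
  ultimately show "x \<bullet> (boost v *v x) > 0"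
    using \<open>x \<noteq> 0\<close> by (simp add: add_pos_nonneg)
qed

lemma boost_square: "boost v ** boost v = mat 1 + (lorentz_factor v)\<^sup>2 *\<^sub>R outer v v"
  unfolding boost_def identity_plus_outer_mult
proof (intro arg_cong2[where f = "(+)"] refl scaleR_outer_self_eqI)
  let ?c = "(lorentz_factor v - 1) / (v \<bullet> v)"
  have "(?c + ?c + ?c * ?c * (v \<bullet> v)) * (v \<bullet> v)
      = 2 * (?c * (v \<bullet> v)) + (?c * (v \<bullet> v))\<^sup>2"
    by (simp add: algebra_simps power2_eq_square)
  also have "\<dots> = (lorentz_factor v)\<^sup>2 * (v \<bullet> v)"
    unfolding boost_coefficient lorentz_factor_square_mult by (simp add: algebra_simps power2_eq_square)
  finally show "(?c + ?c + ?c * ?c * (v \<bullet> v)) * (v \<bullet> v) = (lorentz_factor v)\<^sup>2 * (v \<bullet> v)" .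
qed

lemma matrix_inv_identity_minus_outer:
  "matrix_inv (mat 1 - outer v v) = mat 1 + (lorentz_factor v)\<^sup>2 *\<^sub>R outer v v"
proof (rule matrix_inv_unique)
  have "mat 1 - outer v v = mat 1 + (-1) *\<^sub>R outer v v" by simp
  moreover have "(- 1 + (lorentz_factor v)\<^sup>2 + - 1 * (lorentz_factor v)\<^sup>2 * (v \<bullet> v)) *\<^sub>R outer v v = 0"
    and "((lorentz_factor v)\<^sup>2 + - 1 + (lorentz_factor v)\<^sup>2 * - 1 * (v \<bullet> v)) *\<^sub>R outer v v = 0"
    using lorentz_factor_square_mult by simp_all
  ultimately show "(mat 1 - outer v v) ** (mat 1 + (lorentz_factor v)\<^sup>2 *\<^sub>R outer v v) = mat 1"
    and "(mat 1 + (lorentz_factor v)\<^sup>2 *\<^sub>R outer v v) ** (mat 1 - outer v v) = mat 1"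
    by (simp_all only: identity_plus_outer_mult) simp_all
qed

text \<open>A square root of \<open>I + \<lambda>\<^sup>2 v v\<^sup>T\<close> commutes with its square, hence with \<open>v v\<^sup>T\<close>
  and with the boost.\<close>
lemma inv_sqrt_mat_identity_minus_outer: "inv_sqrt_mat (mat 1 - outer v v) = boost v"
proof (rule inv_sqrt_mat_eqI)
  show "boost v ** boost v = matrix_inv (mat 1 - outer v v)"
    by (simp add: boost_square matrix_inv_identity_minus_outer)
next
  have mult_rank_one: "S ** (mat 1 + a *\<^sub>R outer v v) = S + a *\<^sub>R (S ** outer v v)"
    and rank_one_mult: "(mat 1 + a *\<^sub>R outer v v) ** S = S + a *\<^sub>R (outer v v ** S)"
    for S :: "real^'n^'n" and a
    by (simp_all add: matrix_add_ldistrib matrix_add_rdistrib matrix_scalar_ac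
        flip: scalar_matrix_assoc)
  fix S assume "S ** S = matrix_inv (mat 1 - outer v v)"
  then have "S ** (mat 1 + (lorentz_factor v)\<^sup>2 *\<^sub>R outer v v)
      = (mat 1 + (lorentz_factor v)\<^sup>2 *\<^sub>R outer v v) ** S"
    by (metis matrix_inv_identity_minus_outer matrix_mul_assoc)
  then have "S ** outer v v = outer v v ** S"
    using lorentz_factor_pos by (simp add: mult_rank_one rank_one_mult)
  then show "S ** boost v = boost v ** S"
    by (simp add: boost_def mult_rank_one rank_one_mult)
qed (simp_all add: transpose_boost pos_def_mat_boost)

lemma matrix_inv_boost: "matrix_inv (boost v) = boost v - lorentz_factor v *\<^sub>R outer v v"
proof -
  define l where "l = lorentz_factor v"
  define c where "c = (l - 1) / (v \<bullet> v)"
  have boost: "boost v = mat 1 + c *\<^sub>R outer v v"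
    by (simp add: boost_def c_def l_def)
  have c: "c * (v \<bullet> v) = l - 1"
    using boost_coefficient by (simp add: c_def l_def)
  have "(c + (c - l) + c * (c - l) * (v \<bullet> v)) * (v \<bullet> v)
      = 2 * (c * (v \<bullet> v)) - l * (v \<bullet> v) + (c * (v \<bullet> v))\<^sup>2 - l * (v \<bullet> v) * (c * (v \<bullet> v))"
    by (simp add: algebra_simps power2_eq_square)
  also have "\<dots> = 0 * (v \<bullet> v)"
    using lorentz_factor_square_mult unfolding c l_def[symmetric]
    by (simp add: algebra_simps power2_eq_square)
  finally have "(c + (c - l) + c * (c - l) * (v \<bullet> v)) *\<^sub>R outer v v = 0"
    using scaleR_outer_self_eqI by fastforce
  moreover have "(c - l) + c + (c - l) * c * (v \<bullet> v) = c + (c - l) + c * (c - l) * (v \<bullet> v)"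
    by (simp add: algebra_simps)
  moreover have "boost v - l *\<^sub>R outer v v = mat 1 + (c - l) *\<^sub>R outer v v"
    by (simp add: boost algebra_simps)
  ultimately show ?thesis
    unfolding l_def[symmetric] boost
    by (intro matrix_inv_unique) (simp_all only: identity_plus_outer_mult, simp_all)
qed

lemma boost_inverse_mult_self:
  "(boost v - lorentz_factor v *\<^sub>R outer v v) *v v = (1 / lorentz_factor v) *\<^sub>R v"
proof -
  have "lorentz_factor v - lorentz_factor v * (v \<bullet> v) = 1 / lorentz_factor v"
    using lorentz_factor_pos lorentz_factor_square
    by (simp add: field_simps power2_eq_square)
  then show ?thesis
    by (simp add: matrix_vector_mult_diff_rdistrib boost_mult_self outer_mult_vector
        flip: scaleR_matrix_vector_assoc scaleR_diff_left)
qed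

end

locale boosted_frames =
  fixes e m :: "real^'n^'n" and v :: "real^'n"
  assumes invertible_e: "invertible e" and invertible_m: "invertible m"
    and subluminal: "v \<bullet> v < 1"
begin

definition n where "n = matrix_inv e *v v"
definition nt where "nt = matrix_inv m *v v"
definition Dt where "Dt = matrix_inv e ** matrix_inv (boost v) ** m"
definition B where "B = matrix_inv e ** boost v ** m"
definition w where "w = transpose m *v v"

lemma e_mult_n: "e *v n = v"
  by (simp add: n_def matrix_vector_mul_assoc matrix_inv_right[OF invertible_e])

lemma m_mult_nt: "m *v nt = v"
  by (simp add: nt_def matrix_vector_mul_assoc matrix_inv_right[OF invertible_m])

lemma B_eq_Dt_add_outer: "B = Dt + outer (lorentz_factor v *\<^sub>R n) w"
proof -
  have "B - Dt = matrix_inv e ** (lorentz_factor v *\<^sub>R outer v v) ** m"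
    by (simp add: B_def Dt_def matrix_inv_boost[OF subluminal] matrix_diff_ldistrib
        matrix_diff_rdistrib)
  also have "\<dots> = outer (lorentz_factor v *\<^sub>R n) w"
    by (simp add: mult_outer outer_mult n_def w_def matrix_scalar_ac
        flip: scalar_matrix_assoc scaleR_matrix_vector_assoc)
  finally show ?thesis by (simp add: algebra_simps)
qed

lemma Dt_mult_nt: "Dt *v nt = (1 / lorentz_factor v) *\<^sub>R n"
  by (simp add: Dt_def matrix_inv_boost[OF subluminal] boost_inverse_mult_self[OF subluminal]
      m_mult_nt n_def matrix_vector_mult_scaleR flip: matrix_vector_mul_assoc)

lemma esym_B_minus_esym_Dt: "esym k B - esym k Dt = lorentz_factor v * (w \<bullet> (Ymat (k - 1) Dt *v n))"
  by (simp add: B_eq_Dt_add_outer esym_add_outer matrix_vector_mult_scaleR)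

lemma Ymat_B_mult_n: "Ymat k B *v n = Ymat k Dt *v n"
proof -
  have "lorentz_factor v *\<^sub>R (Ymat k B *v n) = lorentz_factor v *\<^sub>R (Ymat k Dt *v n)"
    using Ymat_add_outer_mult[of k Dt "lorentz_factor v *\<^sub>R n" w]
    by (simp add: B_eq_Dt_add_outer matrix_vector_mult_scaleR)
  then show ?thesis using lorentz_factor_pos[OF subluminal] by simp
qed

lemma inner_w: "w \<bullet> x = v \<bullet> (m *v x)"
  unfolding w_def transpose_matrix_vector by (rule dot_lmul_matrix)

lemma gamma_quadratic_form:
  "n \<bullet> ((transpose e ** e) ** (B ** Y) *v n) = lorentz_factor v * (w \<bullet> (Y *v n))"
proof -
  have "(transpose e ** e) ** (B ** Y) = transpose e ** (e ** matrix_inv e) ** boost v ** m ** Y"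
    by (simp add: B_def matrix_mul_assoc)
  also have "\<dots> = transpose e ** (boost v ** (m ** Y))"
    by (simp add: matrix_inv_right[OF invertible_e] matrix_mul_assoc)
  finally have "n \<bullet> ((transpose e ** e) ** (B ** Y) *v n)
      = n \<bullet> (transpose e *v (boost v *v (m *v (Y *v n))))"
    by (simp only: matrix_vector_mul_assoc)
  also have "\<dots> = v \<bullet> (boost v *v (m *v (Y *v n)))"
    by (simp only: inner_transpose_mult e_mult_n)
  finally show ?thesis
    by (simp add: inner_boost[OF subluminal] inner_w)
qed

lemma Dt_Ymat_mult_nt: "Dt ** Ymat j Dt *v nt = (1 / lorentz_factor v) *\<^sub>R (Ymat j Dt *v n)"
  by (simp add: Ymat_commute Dt_mult_nt matrix_vector_mult_scaleR flip: matrix_vector_mul_assoc)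

lemma phi_quadratic_form:
  "nt \<bullet> ((transpose m ** m) ** (Dt ** Ymat j Dt) *v nt)
   = (1 / lorentz_factor v) * (w \<bullet> (Ymat j Dt *v n))"
proof -
  have "nt \<bullet> ((transpose m ** m) ** (Dt ** Ymat j Dt) *v nt)
      = nt \<bullet> (transpose m *v (m *v (Dt ** Ymat j Dt *v nt)))"
    by (simp only: matrix_vector_mul_assoc matrix_mul_assoc)
  also have "\<dots> = v \<bullet> (m *v (Dt ** Ymat j Dt *v nt))"
    by (simp only: inner_transpose_mult m_mult_nt)
  finally show ?thesis
    by (simp add: Dt_Ymat_mult_nt inner_w matrix_vector_mult_scaleR)
qed

end

theorem mainTheorem3:
  fixes e m :: "real^'n^'n" and v :: "real^'n" and k :: int
  assumes "invertible e" and "invertible m"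
    and "v \<bullet> v < 1"
    and "transpose (transpose e ** inv_sqrt_mat (mat 1 - outer v v) ** m)
         = transpose e ** inv_sqrt_mat (mat 1 - outer v v) ** m"
  shows
    "let lam = 1 / sqrt (1 - v \<bullet> v);
         Lh = inv_sqrt_mat (mat 1 - outer v v);
         gam = transpose e ** e;
         phi = transpose m ** m;
         n = matrix_inv e *v v;
         nt = matrix_inv m *v v;
         Dt = matrix_inv e ** matrix_inv Lh ** m;
         B = matrix_inv e ** Lh ** m;
         U = (1 / lam) *\<^sub>R Ymat (k - 1) B;
         Ut = Dt ** Ymat (k - 1) Dt;
         W = B ** Ymat (k - 1) Dt;
         V = esym k Dt;
         rho = - esym k B;
         j = - (gam ** W *v n)
     in rho + V = j \<bullet> n
      \<and> esym k B - esym k Dt = n \<bullet> (gam ** W *v n)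
      \<and> U *v n = Ut *v nt
      \<and> n \<bullet> (gam ** W *v n) = lam\<^sup>2 * (nt \<bullet> (phi ** Ut *v nt))"
proof -
  interpret boosted_frames e m v
    using assms(1-3) by unfold_locales
  let ?Y = "Ymat (k - 1) Dt" and ?l = "lorentz_factor v"
  have esym: "esym k B - esym k Dt = n \<bullet> ((transpose e ** e) ** (B ** ?Y) *v n)"
    by (simp add: esym_B_minus_esym_Dt gamma_quadratic_form)
  have Ut: "((1 / ?l) *\<^sub>R Ymat (k - 1) B) *v n = Dt ** ?Y *v nt"
    by (simp add: Ymat_B_mult_n Dt_Ymat_mult_nt flip: scaleR_matrix_vector_assoc)
  have quadratic_forms: "n \<bullet> ((transpose e ** e) ** (B ** ?Y) *v n)
      = ?l\<^sup>2 * (nt \<bullet> ((transpose m ** m) ** (Dt ** ?Y) *v nt))"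
    using lorentz_factor_pos[OF assms(3)]
    by (simp add: gamma_quadratic_form phi_quadratic_form power2_eq_square)
  show ?thesis
    unfolding Let_def inv_sqrt_mat_identity_minus_outer[OF assms(3)]
      lorentz_factor_def[symmetric] n_def[symmetric] nt_def[symmetric]
      Dt_def[symmetric] B_def[symmetric]
    using esym Ut quadratic_forms by (simp add: inner_commute)
qed

end
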